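(* Let $n,p\ge1$ be integers and let $A=A^{p+1}_{n+1}$ with the multiplication $\odot$ defined in the context. Then $\odot$ is associative and commutative, and $\langle A;\odot,\top\rangle$ is a commutative monoid with neutral element $\top=\langle(n,0),p\rangle$.
   Context: Order $\mathbb{Z}\times\mathbb{Z}$ lexicographically: $(m,r)\preccurlyeq(k,s)$ iff $m<k$, or $m=k$ and $r\le s$; addition/subtraction of pairs is componentwise, and $\min,\max$ of pairs refer to $\preccurlyeq$. For an integer $n\ge1$ let $L^\omega_{n+1}=\{(m,r)\in\mathbb{Z}^2:(0,0)\preccurlyeq(m,r)\preccurlyeq(n,0)\}$ with $x\ast y=\max\{(0,0),x+y-(n,0)\}$ and $x\to y=\min\{(n,0),(n,0)-x+y\}$. For an integer $p\ge1$ let $L_{p+1}=\{0,1,\dots,p\}$ with $\alpha\ast\beta=\max\{0,\alpha+\beta-p\}$. Define $$A=A^{p+1}_{n+1}=\{\langle(m,r),\alpha\rangle:(m,r)\in L^\omega_{n+1},\ \alpha\in\{0,p\}\}\cup\{\langle(m,r),\alpha\rangle:(0,0)\preccurlyeq(m,r)\preccurlyeq(n-1,0),\ 0<\alpha<p\}.$$ Put $\bot=\langle(n,0),0\rangle$, $\top=\langle(n,0),p\rangle$. For $a=\langle(m,r),\alpha\rangle$, $b=\langle(k,s),\beta\rangle\in A$ define $a\odot b$ by: (P1) if $\alpha,\beta\ge1$ and $\alpha+\beta>p$: $a\odot b=\langle(m,r)\ast(k,s),\alpha+\beta-p\rangle$; (P2) if $\alpha,\beta\ge1$ and $\alpha+\beta\le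 p$: $a\odot b=\langle\min\{(n,0),(2n-(m+k+1),-(r+s))\},0\rangle$; (P3) if $\alpha\ge1$, $\beta=0$: $a\odot b=\langle(m,r)\to(k,s),0\rangle$, and if $\alpha=0$, $\beta\ge1$: $a\odot b=\langle(k,s)\to(m,r),0\rangle$; (P4) if $\alpha=\beta=0$: $a\odot b=\langle\min\{(n,0),(m+k+1,r+s)\},0\rangle$. *)

theory Defs
  imports "HOL-Algebra.Group"
begin

definition lexle :: "int \<times> int \<Rightarrow> int \<times> int \<Rightarrow> bool" where
  "lexle x y \<longleftrightarrow> fst x < fst y \<or> (fst x = fst y \<and> snd x \<le> snd y)"

definition lexmin :: "int \<times> int \<Rightarrow> int \<times> int \<Rightarrow> int \<times> int" where
  "lexmin x y = (if lexle x y then x else y)"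

definition lexmax :: "int \<times> int \<Rightarrow> int \<times> int \<Rightarrow> int \<times> int" where
  "lexmax x y = (if lexle x y then y else x)"

definition lstar :: "int \<Rightarrow> int \<times> int \<Rightarrow> int \<times> int \<Rightarrow> int \<times> int" where
  "lstar n x y = lexmax (0,0) (fst x + fst y - n, snd x + snd y)"

definition limp :: "int \<Rightarrow> int \<times> int \<Rightarrow> int \<times> int \<Rightarrow> int \<times> int" where
  "limp n x y = lexmin (n,0) (n - fst x + fst y, - snd x + snd y)"

(* carrier A^{p+1}_{n+1}; elements <(m,r),alpha> encoded as ((m,r),alpha) *)
definition Acar :: "int \<Rightarrow> int \<Rightarrow> ((int \<times> int) \<times> int) set" where
  "Acar n p =
     {(x, \<alpha>). lexle (0,0) x \<and> lexle x (n,0) \<and> (\<alpha> = 0 \<or> \<alpha> = p)}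
   \<union> {(x, \<alpha>). lexle (0,0) x \<and> lexle x (n - 1, 0) \<and> 0 < \<alpha> \<and> \<alpha> < p}"

definition Abot :: "int \<Rightarrow> int \<Rightarrow> (int \<times> int) \<times> int" where
  "Abot n p = ((n,0), 0)"

definition Atop :: "int \<Rightarrow> int \<Rightarrow> (int \<times> int) \<times> int" where
  "Atop n p = ((n,0), p)"

definition odot :: "int \<Rightarrow> int \<Rightarrow> (int \<times> int) \<times> int \<Rightarrow> (int \<times> int) \<times> int
                    \<Rightarrow> (int \<times> int) \<times> int" where
  "odot n p a b =
    (let x = fst a; \<alpha> = snd a; y = fst b; \<beta> = snd b in
     if 1 \<le> \<alpha> \<and> 1 \<le> \<beta> \<and> \<alpha> + \<beta> > p then (lstar n x y, \<alpha> + \<beta> - p)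
     else if 1 \<le> \<alpha> \<and> 1 \<le> \<beta> then
       (lexmin (n,0) (2*n - (fst x + fst y + 1), - (snd x + snd y)), 0)
     else if 1 \<le> \<alpha> \<and> \<beta> = 0 then (limp n x y, 0)
     else if \<alpha> = 0 \<and> 1 \<le> \<beta> then (limp n y x, 0)
     else (lexmin (n,0) (fst x + fst y + 1, snd x + snd y), 0))"

definition Amonoid :: "int \<Rightarrow> int \<Rightarrow> ((int \<times> int) \<times> int) monoid" where
  "Amonoid n p = \<lparr>carrier = Acar n p, mult = odot n p, one = Atop n p\<rparr>"

end

theory Submission
  imports Defs
begin

text \<open>
  All second coordinates occurring in a product of three elements are bounded in absolute value
  by a constant \<open>S\<close>; on such pairs the lexicographic order is the order of the integer
  \<open>K * m + r\<close> for any \<open>K > 2 * S\<close>. The operations \<open>\<ast>\<close> and \<open>\<rightarrow>\<close>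
  and the cases (P2), (P4) are minima and maxima of affine expressions, so this embedding
  carries \<open>\<odot>\<close> to the same operation on the chain \<open>{0, \<dots>, K n}\<close> with step
  \<open>K\<close>. Associativity there is a finite case analysis in linear integer arithmetic, and it
  pulls back along the embedding because the embedding is injective on bounded pairs.
\<close>

lemma odot_P1:
  "1 \<le> \<alpha> \<Longrightarrow> 1 \<le> \<beta> \<Longrightarrow> p < \<alpha> + \<beta> \<Longrightarrow>
    odot n p (x, \<alpha>) (y, \<beta>) = (lstar n x y, \<alpha> + \<beta> - p)"
  and odot_P2:
  "1 \<le> \<alpha> \<Longrightarrow> 1 \<le> \<beta> \<Longrightarrow> \<alpha> + \<beta> \<le> p \<Longrightarrow>
    odot n p (x, \<alpha>) (y, \<beta>) = (lexmin (n, 0) (2 * n - (fst x + fst y + 1), - (snd x + snd y)), 0)"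
  and odot_P3:
  "1 \<le> \<alpha> \<Longrightarrow> odot n p (x, \<alpha>) (y, 0) = (limp n x y, 0)"
  "1 \<le> \<beta> \<Longrightarrow> odot n p (x, 0) (y, \<beta>) = (limp n y x, 0)"
  and odot_P4:
  "odot n p (x, 0) (y, 0) = (lexmin (n, 0) (fst x + fst y + 1, snd x + snd y), 0)"
  by (simp_all add: odot_def)

lemmas odot_simps = odot_P1 odot_P2 odot_P3 odot_P4

lemma odot_snd_nonneg: "0 \<le> snd (odot n p a b)"
  by (simp add: odot_def Let_def)

lemma Acar_snd_nonneg: "(x, \<alpha>) \<in> Acar n p \<Longrightarrow> 0 \<le> p \<Longrightarrow> 0 \<le> \<alpha>"
  by (auto simp: Acar_def)

lemma odot_commute:
  assumes "0 \<le> \<alpha>" "0 \<le> \<beta>"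
  shows "odot n p (x, \<alpha>) (y, \<beta>) = odot n p (y, \<beta>) (x, \<alpha>)"
  using assms
  by (cases "\<alpha> = 0"; cases "\<beta> = 0"; cases "p < \<alpha> + \<beta>")
     (simp_all add: odot_simps lstar_def ac_simps)

lemma odot_Atop_left:
  assumes "1 \<le> p" "a \<in> Acar n p"
  shows "odot n p (Atop n p) a = a"
proof -
  obtain m r \<alpha> where a: "a = ((m, r), \<alpha>)"
    by (metis prod.collapse)
  have x: "lexle (0, 0) (m, r)" "lexle (m, r) (n, 0)" and "\<alpha> = 0 \<or> 1 \<le> \<alpha>" "\<alpha> \<le> p"
    using assms a by (auto simp: Acar_def lexle_def)
  then consider "\<alpha> = 0" | "1 \<le> \<alpha>"
    by blast
  then show ?thesis
  proof cases
    case 1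
    then show ?thesis
      using assms(1) x a by (auto simp: Atop_def odot_simps limp_def lexmin_def lexle_def)
  next
    case 2
    then show ?thesis
      using assms(1) x a \<open>\<alpha> \<le> p\<close>
      by (auto simp: Atop_def odot_simps lstar_def lexmax_def lexle_def)
  qed
qed

text \<open>
  The image of \<open>\<odot>\<close> and of its carrier under \<open>((m, r), \<alpha>) \<mapsto> (K m + r, \<alpha>)\<close>,
  with \<open>N = K n\<close>.
\<close>

definition int_odot :: "int \<Rightarrow> int \<Rightarrow> int \<Rightarrow> int \<times> int \<Rightarrow> int \<times> int \<Rightarrow> int \<times> int" where
  "int_odot K N p a b =
    (let x = fst a; \<alpha> = snd a; y = fst b; \<beta> = snd b in
     if 1 \<le> \<alpha> \<and> 1 \<le> \<beta> \<and> \<alpha> + \<beta> > p then (max 0 (x + y - N), \<alpha> + \<beta> - p)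
     else if 1 \<le> \<alpha> \<and> 1 \<le> \<beta> then (min N (2 * N - (x + y + K)), 0)
     else if 1 \<le> \<alpha> \<and> \<beta> = 0 then (min N (N - x + y), 0)
     else if \<alpha> = 0 \<and> 1 \<le> \<beta> then (min N (N - y + x), 0)
     else (min N (x + y + K), 0))"

definition int_car :: "int \<Rightarrow> int \<Rightarrow> int \<Rightarrow> (int \<times> int) set" where
  "int_car K N p =
    {(x, \<alpha>). 0 \<le> x \<and> x \<le> N \<and> 0 \<le> \<alpha> \<and> \<alpha> \<le> p \<and> (0 < \<alpha> \<and> \<alpha> < p \<longrightarrow> x \<le> N - K)}"

lemma int_odot_P1:
  "1 \<le> \<alpha> \<Longrightarrow> 1 \<le> \<beta> \<Longrightarrow> p < \<alpha> + \<beta> \<Longrightarrow>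
    int_odot K N p (x, \<alpha>) (y, \<beta>) = (max 0 (x + y - N), \<alpha> + \<beta> - p)"
  and int_odot_P2:
  "1 \<le> \<alpha> \<Longrightarrow> 1 \<le> \<beta> \<Longrightarrow> \<alpha> + \<beta> \<le> p \<Longrightarrow>
    int_odot K N p (x, \<alpha>) (y, \<beta>) = (min N (2 * N - (x + y + K)), 0)"
  and int_odot_P3:
  "1 \<le> \<alpha> \<Longrightarrow> int_odot K N p (x, \<alpha>) (y, 0) = (min N (N - x + y), 0)"
  "1 \<le> \<beta> \<Longrightarrow> int_odot K N p (x, 0) (y, \<beta>) = (min N (N - y + x), 0)"
  and int_odot_P4:
  "int_odot K N p (x, 0) (y, 0) = (min N (x + y + K), 0)"
  by (simp_all add: int_odot_def)

lemmas int_odot_simps = int_odot_P1 int_odot_P2 int_odot_P3 int_odot_P4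

lemma int_odot_closed:
  assumes "0 \<le> K" "(x1, a1) \<in> int_car K N p" "(x2, a2) \<in> int_car K N p"
  shows "int_odot K N p (x1, a1) (x2, a2) \<in> int_car K N p"
  using assms unfolding int_car_def
  by (cases "a1 = 0"; cases "a2 = 0"; cases "a1 < p"; cases "a2 < p"; cases "p < a1 + a2";
      auto simp: int_odot_simps)

lemma int_odot_assoc:
  assumes "0 \<le> K"
    and "(x1, a1) \<in> int_car K N p" "(x2, a2) \<in> int_car K N p" "(x3, a3) \<in> int_car K N p"
  shows "int_odot K N p (int_odot K N p (x1, a1) (x2, a2)) (x3, a3)
       = int_odot K N p (x1, a1) (int_odot K N p (x2, a2) (x3, a3))"
proof -
  have "a1 = 0 \<or> 1 \<le> a1" "a2 = 0 \<or> 1 \<le> a2" "a3 = 0 \<or> 1 \<le> a3"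
    using assms by (auto simp: int_car_def)
  then show ?thesis
    using assms unfolding int_car_def
    apply (elim disjE)
    subgoal by (clarsimp simp: int_odot_simps) linarith
    subgoal by (cases "a3 < p"; clarsimp simp: int_odot_simps; linarith)
    subgoal by (cases "a2 < p"; clarsimp simp: int_odot_simps; linarith)
    subgoal by (cases "a2 < p"; cases "a3 < p"; cases "p < a2 + a3";
        clarsimp simp: int_odot_simps; linarith)
    subgoal by (cases "a1 < p"; clarsimp simp: int_odot_simps; linarith)
    subgoal by (cases "a1 < p"; cases "a3 < p"; clarsimp simp: int_odot_simps; linarith)
    subgoal by (cases "a1 < p"; cases "a2 < p"; cases "p < a1 + a2";
        clarsimp simp: int_odot_simps; linarith)
    subgoal by (cases "a1 < p"; cases "a2 < p"; cases "a3 < p"; cases "p < a1 + a2";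
        cases "p < a2 + a3"; cases "2 * p < a1 + a2 + a3"; clarsimp simp: int_odot_simps; linarith)
    done
qed

definition lex_embed :: "int \<Rightarrow> int \<times> int \<Rightarrow> int" where
  "lex_embed K u = K * fst u + snd u"

lemma lexle_iff_lex_embed_le:
  assumes K: "2 * S < K" and u: "\<bar>snd u\<bar> \<le> S" and v: "\<bar>snd v\<bar> \<le> S"
  shows "lexle u v \<longleftrightarrow> lex_embed K u \<le> lex_embed K v"
proof -
  have far: "K \<le> K * fst w - K * fst w'" if "fst w' < fst w" for w w' :: "int \<times> int"
  proof -
    have "K * 1 \<le> K * (fst w - fst w')"
      using that K u by (intro mult_left_mono) auto
    then show ?thesis
      by (simp add: right_diff_distrib)
  qed
  consider "fst u < fst v" | "fst u = fst v" | "fst v < fst u"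
    by linarith
  then show ?thesis
  proof cases
    case 1
    with far[of u v] u v K show ?thesis
      by (simp add: lexle_def lex_embed_def abs_le_iff)
  next
    case 2
    then show ?thesis
      by (simp add: lexle_def lex_embed_def)
  next
    case 3
    with far[of v u] u v K show ?thesis
      by (simp add: lexle_def lex_embed_def abs_le_iff)
  qed
qed

lemma lex_embed_inj:
  assumes "2 * S < K" "\<bar>snd u\<bar> \<le> S" "\<bar>snd v\<bar> \<le> S" "lex_embed K u = lex_embed K v"
  shows "u = v"
  using lexle_iff_lex_embed_le[OF assms(1-3)] lexle_iff_lex_embed_le[OF assms(1,3,2)] assms(4)
  by (auto simp: lexle_def prod_eq_iff)

lemma lex_embed_lexmin:
  assumes "2 * S < K" "\<bar>snd u\<bar> \<le> S" "\<bar>snd v\<bar> \<le> S"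
  shows "lex_embed K (lexmin u v) = min (lex_embed K u) (lex_embed K v)"
    and "\<bar>snd (lexmin u v)\<bar> \<le> S"
  using lexle_iff_lex_embed_le[OF assms] assms by (auto simp: lexmin_def)

lemma lex_embed_lexmax:
  assumes "2 * S < K" "\<bar>snd u\<bar> \<le> S" "\<bar>snd v\<bar> \<le> S"
  shows "lex_embed K (lexmax u v) = max (lex_embed K u) (lex_embed K v)"
    and "\<bar>snd (lexmax u v)\<bar> \<le> S"
  using lexle_iff_lex_embed_le[OF assms] assms by (auto simp: lexmax_def)

definition elem_embed :: "int \<Rightarrow> (int \<times> int) \<times> int \<Rightarrow> int \<times> int" where
  "elem_embed K a = (lex_embed K (fst a), snd a)"

lemma elem_embed_inj:
  assumes "2 * S < K" "\<bar>snd (fst a)\<bar> \<le> S" "\<bar>snd (fst b)\<bar> \<le> S"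
    and "elem_embed K a = elem_embed K b"
  shows "a = b"
  using lex_embed_inj[OF assms(1-3)] assms(4) by (simp add: elem_embed_def prod_eq_iff)

lemma Acar_iff_elem_embed:
  assumes "2 * S < K" "\<bar>snd x\<bar> \<le> S" "0 \<le> p"
  shows "(x, \<alpha>) \<in> Acar n p \<longleftrightarrow> elem_embed K (x, \<alpha>) \<in> int_car K (K * n) p"
proof -
  have bounds:
    "\<bar>snd (0::int, 0::int)\<bar> \<le> S" "\<bar>snd (n, 0::int)\<bar> \<le> S" "\<bar>snd (n - 1, 0::int)\<bar> \<le> S"
    using assms(2) by auto
  show ?thesis
    using lexle_iff_lex_embed_le[OF assms(1) bounds(1) assms(2)]
      lexle_iff_lex_embed_le[OF assms(1) assms(2) bounds(2)]
      lexle_iff_lex_embed_le[OF assms(1) assms(2) bounds(3)] assms(3)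
    by (auto simp: Acar_def int_car_def elem_embed_def lex_embed_def lexle_def algebra_simps)
qed

lemma elem_embed_odot:
  assumes K: "2 * (s + t) < K" and x: "\<bar>snd x\<bar> \<le> s" and y: "\<bar>snd y\<bar> \<le> t"
    and "0 \<le> \<alpha>" "0 \<le> \<beta>"
  shows "elem_embed K (odot n p (x, \<alpha>) (y, \<beta>))
           = int_odot K (K * n) p (elem_embed K (x, \<alpha>)) (elem_embed K (y, \<beta>))"
    and "\<bar>snd (fst (odot n p (x, \<alpha>) (y, \<beta>)))\<bar> \<le> s + t"
proof -
  let ?X = "lex_embed K x" and ?Y = "lex_embed K y"
  have bounds:
    "\<bar>snd (0::int, 0::int)\<bar> \<le> s + t" "\<bar>snd (n, 0::int)\<bar> \<le> s + t"
    "\<bar>snd (fst x + fst y - n, snd x + snd y)\<bar> \<le> s + t"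
    "\<bar>snd (n - fst x + fst y, - snd x + snd y)\<bar> \<le> s + t"
    "\<bar>snd (n - fst y + fst x, - snd y + snd x)\<bar> \<le> s + t"
    "\<bar>snd (2 * n - (fst x + fst y + 1), - snd x - snd y)\<bar> \<le> s + t"
    "\<bar>snd (fst x + fst y + 1, snd x + snd y)\<bar> \<le> s + t"
    using x y by (auto simp: abs_le_iff)
  have P1: "lex_embed K (lstar n x y) = max 0 (?X + ?Y - K * n)"
    unfolding lstar_def lex_embed_lexmax(1)[OF K bounds(1,3)]
    by (simp add: lex_embed_def algebra_simps)
  have P2: "lex_embed K (lexmin (n, 0) (2 * n - (fst x + fst y + 1), - snd x - snd y))
      = min (K * n) (2 * (K * n) - (?X + ?Y + K))"
    unfolding lex_embed_lexmin(1)[OF K bounds(2,6)] by (simp add: lex_embed_def algebra_simps)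
  have P3: "lex_embed K (limp n x y) = min (K * n) (K * n - ?X + ?Y)"
    "lex_embed K (limp n y x) = min (K * n) (K * n - ?Y + ?X)"
    unfolding limp_def lex_embed_lexmin(1)[OF K bounds(2,4)] lex_embed_lexmin(1)[OF K bounds(2,5)]
    by (simp_all add: lex_embed_def algebra_simps)
  have P4: "lex_embed K (lexmin (n, 0) (fst x + fst y + 1, snd x + snd y))
      = min (K * n) (?X + ?Y + K)"
    unfolding lex_embed_lexmin(1)[OF K bounds(2,7)] by (simp add: lex_embed_def algebra_simps)
  have snd_bounds: "\<bar>snd (lstar n x y)\<bar> \<le> s + t" "\<bar>snd (limp n x y)\<bar> \<le> s + t"
    "\<bar>snd (limp n y x)\<bar> \<le> s + t"
    "\<bar>snd (lexmin (n, 0) (2 * n - (fst x + fst y + 1), - snd x - snd y))\<bar> \<le> s + t"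
    "\<bar>snd (lexmin (n, 0) (fst x + fst y + 1, snd x + snd y))\<bar> \<le> s + t"
    unfolding lstar_def limp_def
    using lex_embed_lexmax(2)[OF K bounds(1,3)] lex_embed_lexmin(2)[OF K bounds(2,4)]
      lex_embed_lexmin(2)[OF K bounds(2,5)] lex_embed_lexmin(2)[OF K bounds(2,6)]
      lex_embed_lexmin(2)[OF K bounds(2,7)]
    by simp_all
  consider "\<alpha> = 0" "\<beta> = 0" | "\<alpha> = 0" "1 \<le> \<beta>" | "1 \<le> \<alpha>" "\<beta> = 0"
    | "1 \<le> \<alpha>" "1 \<le> \<beta>" "p < \<alpha> + \<beta>" | "1 \<le> \<alpha>" "1 \<le> \<beta>" "\<alpha> + \<beta> \<le> p"
    using assms by linarith
  then show "elem_embed K (odot n p (x, \<alpha>) (y, \<beta>))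
           = int_odot K (K * n) p (elem_embed K (x, \<alpha>)) (elem_embed K (y, \<beta>))"
    and "\<bar>snd (fst (odot n p (x, \<alpha>) (y, \<beta>)))\<bar> \<le> s + t"
    by (cases; simp add: odot_simps int_odot_simps elem_embed_def P1 P2 P3 P4 snd_bounds)+
qed

lemma odot_closed:
  assumes "0 \<le> p" "a \<in> Acar n p" "b \<in> Acar n p"
  shows "odot n p a b \<in> Acar n p"
proof -
  obtain x \<alpha> y \<beta> where ab: "a = (x, \<alpha>)" "b = (y, \<beta>)"
    by (metis prod.collapse)
  define s t where "s = \<bar>snd x\<bar>" and "t = \<bar>snd y\<bar>"
  define K where "K = 2 * (s + t) + 1"
  have K: "2 * (s + t) < K" "2 * s < K" "2 * t < K" "0 \<le> K"
    by (auto simp: K_def s_def t_def)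
  have bounds: "\<bar>snd x\<bar> \<le> s" "\<bar>snd y\<bar> \<le> t"
    by (simp_all add: s_def t_def)
  have in_int:
    "(lex_embed K x, \<alpha>) \<in> int_car K (K * n) p" "(lex_embed K y, \<beta>) \<in> int_car K (K * n) p"
    using assms ab Acar_iff_elem_embed[OF K(2) bounds(1)] Acar_iff_elem_embed[OF K(3) bounds(2)]
    by (auto simp: elem_embed_def)
  obtain z \<gamma> where z: "odot n p (x, \<alpha>) (y, \<beta>) = (z, \<gamma>)"
    by (metis prod.collapse)
  have "0 \<le> \<alpha>" "0 \<le> \<beta>"
    using assms ab Acar_snd_nonneg by blast+
  note embed = elem_embed_odot[where n = n and p = p, OF K(1) bounds this, unfolded z]
  have "elem_embed K (z, \<gamma>) \<in> int_car K (K * n) p"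
    using embed(1) int_odot_closed[OF K(4) in_int] by (simp add: elem_embed_def)
  then show ?thesis
    using Acar_iff_elem_embed[OF K(1) _ assms(1)] embed(2) ab z by simp
qed

lemma odot_assoc:
  assumes "0 \<le> p" "a \<in> Acar n p" "b \<in> Acar n p" "c \<in> Acar n p"
  shows "odot n p (odot n p a b) c = odot n p a (odot n p b c)"
proof -
  obtain x1 \<alpha>1 x2 \<alpha>2 x3 \<alpha>3 where abc: "a = (x1, \<alpha>1)" "b = (x2, \<alpha>2)" "c = (x3, \<alpha>3)"
    by (metis prod.collapse)
  define s1 s2 s3 where "s1 = \<bar>snd x1\<bar>" and "s2 = \<bar>snd x2\<bar>" and "s3 = \<bar>snd x3\<bar>"
  define K where "K = 2 * (s1 + s2 + s3) + 1"
  have K: "2 * (s1 + s2) < K" "2 * (s2 + s3) < K" "2 * (s1 + s2 + s3) < K"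
    "2 * (s1 + (s2 + s3)) < K" "2 * s1 < K" "2 * s2 < K" "2 * s3 < K" "0 \<le> K"
    by (auto simp: K_def s1_def s2_def s3_def)
  have bounds: "\<bar>snd x1\<bar> \<le> s1" "\<bar>snd x2\<bar> \<le> s2" "\<bar>snd x3\<bar> \<le> s3"
    by (simp_all add: s1_def s2_def s3_def)
  have nonneg: "0 \<le> \<alpha>1" "0 \<le> \<alpha>2" "0 \<le> \<alpha>3"
    using assms abc Acar_snd_nonneg by blast+
  have in_int: "elem_embed K (x1, \<alpha>1) \<in> int_car K (K * n) p"
    "elem_embed K (x2, \<alpha>2) \<in> int_car K (K * n) p" "elem_embed K (x3, \<alpha>3) \<in> int_car K (K * n) p"
    using assms abc Acar_iff_elem_embed[OF K(5) bounds(1)] Acar_iff_elem_embed[OF K(6) bounds(2)]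
      Acar_iff_elem_embed[OF K(7) bounds(3)]
    by auto
  obtain u \<mu> where u: "odot n p (x1, \<alpha>1) (x2, \<alpha>2) = (u, \<mu>)"
    by (metis prod.collapse)
  obtain w \<nu> where w: "odot n p (x2, \<alpha>2) (x3, \<alpha>3) = (w, \<nu>)"
    by (metis prod.collapse)
  note embed_u = elem_embed_odot[where n = n and p = p, OF K(1) bounds(1,2) nonneg(1,2), unfolded u]
  note embed_w = elem_embed_odot[where n = n and p = p, OF K(2) bounds(2,3) nonneg(2,3), unfolded w]
  have "0 \<le> \<mu>" "0 \<le> \<nu>"
    using odot_snd_nonneg u w by (metis snd_conv)+
  note embed_uc = elem_embed_odot[where n = n and p = p,
      OF K(3) embed_u(2)[simplified] bounds(3) \<open>0 \<le> \<mu>\<close> nonneg(3)]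
  note embed_aw = elem_embed_odot[where n = n and p = p,
      OF K(4) bounds(1) embed_w(2)[simplified] nonneg(1) \<open>0 \<le> \<nu>\<close>]
  have "elem_embed K (odot n p (u, \<mu>) (x3, \<alpha>3)) = elem_embed K (odot n p (x1, \<alpha>1) (w, \<nu>))"
    using embed_uc(1) embed_aw(1) embed_u(1) embed_w(1) int_odot_assoc[OF K(8), where N = "K * n"] in_int
    by (simp add: elem_embed_def)
  then have "odot n p (u, \<mu>) (x3, \<alpha>3) = odot n p (x1, \<alpha>1) (w, \<nu>)"
    using elem_embed_inj[OF K(3)] embed_uc(2) embed_aw(2) by (simp add: add.assoc)
  then show ?thesis
    using abc u w by simp
qed

lemma odot_commute_Acar:
  assumes "0 \<le> p" "a \<in> Acar n p" "b \<in> Acar n p"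
  shows "odot n p a b = odot n p b a"
proof -
  obtain x \<alpha> y \<beta> where ab: "a = (x, \<alpha>)" "b = (y, \<beta>)"
    by (metis prod.collapse)
  show ?thesis
    using odot_commute Acar_snd_nonneg assms ab by blast
qed

theorem mainTheorem3:
  fixes n p :: int
  assumes "1 \<le> n" and "1 \<le> p"
  shows "(\<forall>a\<in>Acar n p. \<forall>b\<in>Acar n p. \<forall>c\<in>Acar n p.
            odot n p (odot n p a b) c = odot n p a (odot n p b c))
       \<and> (\<forall>a\<in>Acar n p. \<forall>b\<in>Acar n p. odot n p a b = odot n p b a)
       \<and> comm_monoid (Amonoid n p)"
proof -
  have p: "0 \<le> p"
    using assms(2) by simp
  have "comm_monoid (Amonoid n p)"
  proof (rule comm_monoidI, unfold Amonoid_def monoid.simps partial_object.simps)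
    show "Atop n p \<in> Acar n p"
      using assms by (auto simp: Atop_def Acar_def lexle_def)
  qed (auto simp: odot_closed odot_assoc odot_Atop_left p assms(2) intro: odot_commute_Acar)
  then show ?thesis
    using odot_assoc[OF p] odot_commute_Acar[OF p] by blast
qed

end
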